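(* For every relational structure $\mathfrak{C}$ in which every relation symbol has arity at most $m$ (for some $m\in\mathbb N$) there exists a relational structure $\mathfrak{B}$ in which every relation symbol has arity at most $2$ such that $\mathfrak{B}$ and $\mathfrak{C}$ are primitively positively bi-interpretable. If the signature of $\mathfrak{C}$ is finite, then $\mathfrak{B}$ can be chosen to have a finite signature as well.
   Context: A primitive positive formula is an existentially quantified conjunction of atomic formulas (relational atoms, equalities, $\top$, $\bot$). A primitive positive (pp-) interpretation $I$ of a $\sigma$-structure $\mathfrak{B}$ in a $\tau$-structure $\mathfrak{A}$ of dimension $d$ consists of a pp $\tau$-formula $\delta_I(x_1,\dots,x_d)$, a pp $\tau$-formula $\phi_I$ for each atomic $\sigma$-formula $\phi$ (including equality), and a surjective coordinate map $h_I\colon D_I\to B$ with $D_I=\delta_I(\mathfrak{A})\subseteq A^d$ such that $\mathfrak{B}\models\phi(h_I(\bar a_1),\dots,h_I(\bar a_k))$ iff $\mathfrak{A}\models\phi_I(\bar a_1,\dots,\bar a_k)$ for all $\bar a_i\in D_I$. If $I_1$ is a $d_1$-dimensional pp-interpretation of $\mathfrak{C}_1$ in $\mathfrak{C}_2$ and $I_2$ a $d_2$-dimensional pp-interpretation of $\mathfrak{C}_2$ in $\mathfrak{C}_3$, the composition $I_1\circ I_2$ is the $d_1d_2$-dimensional pp-interpretation of $\mathfrak{C}_1$ in $\mathfrak{C}_3$ (with formulas obtained by replacing atomic $\tau_2$-formulas in the formulas of $I_1$ by their $I_2$-translations) whose coordinate map sends $(a^1_1,\dots,a^1_{d_2},\dots,a^{d_1}_1,\dots,a^{d_1}_{d_2})$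 to $h_{I_1}(h_{I_2}(a^1_1,\dots,a^1_{d_2}),\dots,h_{I_2}(a^{d_1}_1,\dots,a^{d_1}_{d_2}))$. Two pp-interpretations $I_1,I_2$ of $\mathfrak{B}$ in $\mathfrak{A}$ are homotopic if the relation $\{(\bar x,\bar y)\mid h_{I_1}(\bar x)=h_{I_2}(\bar y)\}$ is pp-definable in $\mathfrak{A}$. The identity interpretation of $\mathfrak{C}$ in $\mathfrak{C}$ is the 1-dimensional one with identity coordinate map. $\mathfrak{A}$ and $\mathfrak{B}$ are primitively positively bi-interpretable if there are pp-interpretations $I$ of $\mathfrak{B}$ in $\mathfrak{A}$ and $J$ of $\mathfrak{A}$ in $\mathfrak{B}$ such that $I\circ J$ and $J\circ I$ are homotopic to the respective identity interpretations. *)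

theory Defs
  imports Main
begin

record ('a, 's) rstruct =
  univ :: "'a set"
  sig  :: "'s set"
  ar   :: "'s \<Rightarrow> nat"
  rel  :: "'s \<Rightarrow> 'a list set"

definition wf_struct :: "('a, 's) rstruct \<Rightarrow> bool" where
  "wf_struct A \<longleftrightarrow> (\<forall>s \<in> sig A. \<forall>t \<in> rel A s. length t = ar A s \<and> set t \<subseteq> univ A)"

definition arity_bounded :: "nat \<Rightarrow> ('a, 's) rstruct \<Rightarrow> bool" where
  "arity_bounded m A \<longleftrightarrow> (\<forall>s \<in> sig A. ar A s \<le> m)"

datatype 's ppf =
    PTop
  | PBot
  | PEq nat nat
  | PRel 's "nat list"
  | PConj "'s ppf" "'s ppf"
  | PEx nat "'s ppf"

fun fv :: "'s ppf \<Rightarrow> nat set" where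
  "fv PTop = {}"
| "fv PBot = {}"
| "fv (PEq i j) = {i, j}"
| "fv (PRel s xs) = set xs"
| "fv (PConj p q) = fv p \<union> fv q"
| "fv (PEx n p) = fv p - {n}"

fun wf_ppf :: "('a, 's) rstruct \<Rightarrow> 's ppf \<Rightarrow> bool" where
  "wf_ppf A (PRel s xs) \<longleftrightarrow> s \<in> sig A \<and> length xs = ar A s"
| "wf_ppf A (PConj p q) \<longleftrightarrow> wf_ppf A p \<and> wf_ppf A q"
| "wf_ppf A (PEx n p) \<longleftrightarrow> wf_ppf A p"
| "wf_ppf A _ \<longleftrightarrow> True"

fun sat :: "('a, 's) rstruct \<Rightarrow> 's ppf \<Rightarrow> (nat \<Rightarrow> 'a) \<Rightarrow> bool" where
  "sat A PTop v \<longleftrightarrow> True"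
| "sat A PBot v \<longleftrightarrow> False"
| "sat A (PEq i j) v \<longleftrightarrow> v i = v j"
| "sat A (PRel s xs) v \<longleftrightarrow> map v xs \<in> rel A s"
| "sat A (PConj p q) v \<longleftrightarrow> sat A p v \<and> sat A q v"
| "sat A (PEx n p) v \<longleftrightarrow> (\<exists>a \<in> univ A. sat A p (v(n := a)))"

definition pp_definable :: "('a, 's) rstruct \<Rightarrow> nat \<Rightarrow> 'a list set \<Rightarrow> bool" where
  "pp_definable A n R \<longleftrightarrow>
     (\<exists>\<phi>. wf_ppf A \<phi> \<and> fv \<phi> \<subseteq> {..<n} \<and>
          R = {xs. length xs = n \<and> set xs \<subseteq> univ A \<and> sat A \<phi> (\<lambda>i. xs ! i)})"

record ('a, 'b) interp =
  idim :: nat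
  idom :: "'a list set"
  imap :: "'a list \<Rightarrow> 'b"

text \<open>I is a pp-interpretation of B in A.  Tuples (a_1,...,a_k) of elements of
  D_I \<subseteq> A^d are passed to the formula as the flattened dk-tuple.\<close>

definition is_pp_interp :: "('a, 's) rstruct \<Rightarrow> ('b, 't) rstruct \<Rightarrow> ('a, 'b) interp \<Rightarrow> bool" where
  "is_pp_interp A B I \<longleftrightarrow>
     (let d = idim I; D = idom I; h = imap I in
       \<comment> \<open>domain formula \<delta>_I\<close>
       pp_definable A d D \<and>
       \<comment> \<open>surjective coordinate map\<close>
       h ` D = univ B \<and>
       \<comment> \<open>translation of each relational atom R(x_1,...,x_k)\<close>
       (\<forall>R \<in> sig B. \<exists>\<phi>. wf_ppf A \<phi> \<and> fv \<phi> \<subseteq> {..< d * ar B R} \<and>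
           (\<forall>as. length as = ar B R \<longrightarrow> set as \<subseteq> D \<longrightarrow>
              (map h as \<in> rel B R \<longleftrightarrow> sat A \<phi> (\<lambda>i. concat as ! i)))) \<and>
       \<comment> \<open>translation of the equality atom x_1 = x_2\<close>
       (\<exists>\<phi>. wf_ppf A \<phi> \<and> fv \<phi> \<subseteq> {..< 2 * d} \<and>
           (\<forall>a \<in> D. \<forall>b \<in> D. h a = h b \<longleftrightarrow> sat A \<phi> (\<lambda>i. (a @ b) ! i))))"

definition blocks :: "nat \<Rightarrow> nat \<Rightarrow> 'a list \<Rightarrow> 'a list list" where
  "blocks n d xs = map (\<lambda>i. take d (drop (i * d) xs)) [0..<n]"

text \<open>Composition I1 \<circ> I2 (I1 interprets C1 in C2, I2 interprets C2 in C3):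
  its domain is the domain of the translated formula \<delta>_{I1}, i.e. the d1*d2-tuples
  whose blocks lie in D_{I2} and whose image under h_{I2} lies in D_{I1}.\<close>

definition interp_comp :: "('b, 'c) interp \<Rightarrow> ('a, 'b) interp \<Rightarrow> ('a, 'c) interp" where
  "interp_comp I1 I2 =
     \<lparr> idim = idim I1 * idim I2,
       idom = {xs. length xs = idim I1 * idim I2 \<and>
                   (\<forall>c \<in> set (blocks (idim I1) (idim I2) xs). c \<in> idom I2) \<and>
                   map (imap I2) (blocks (idim I1) (idim I2) xs) \<in> idom I1},
       imap = (\<lambda>xs. imap I1 (map (imap I2) (blocks (idim I1) (idim I2) xs))) \<rparr>"

definition homotopic :: "('a, 's) rstruct \<Rightarrow> ('a, 'b) interp \<Rightarrow> ('a, 'b) interp \<Rightarrow> bool" where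
  "homotopic A I1 I2 \<longleftrightarrow>
     pp_definable A (idim I1 + idim I2)
       {x @ y | x y. x \<in> idom I1 \<and> y \<in> idom I2 \<and> imap I1 x = imap I2 y}"

definition id_interp :: "('a, 's) rstruct \<Rightarrow> ('a, 'a) interp" where
  "id_interp C = \<lparr> idim = 1, idom = {[a] | a. a \<in> univ C}, imap = hd \<rparr>"

definition pp_biinterpretable :: "('a, 's) rstruct \<Rightarrow> ('b, 't) rstruct \<Rightarrow> bool" where
  "pp_biinterpretable A B \<longleftrightarrow>
     (\<exists>I J. is_pp_interp A B I \<and> is_pp_interp B A J \<and>
            homotopic B (interp_comp I J) (id_interp B) \<and>
            homotopic A (interp_comp J I) (id_interp A))"

end

theory Submission
  imports Defs
begin

text \<open>
  Fix \<open>n \<ge> 1\<close> bounding the arities of \<open>C\<close>. The binary structure \<open>B\<close> lives on \<open>C\<^sup>n\<close>: a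
  \<open>k\<close>-ary relation \<open>R\<close> of \<open>C\<close> becomes the unary relation "the first \<open>k\<close> coordinates lie in \<open>R\<close>",
  and binary relations \<open>E\<^sub>i\<^sub>j = {(a, b). a\<^sub>i = b\<^sub>j}\<close> tie coordinates together. \<open>B\<close> is interpreted
  in \<open>C\<close> \<open>n\<close>-dimensionally by the identity, and \<open>C\<close> in \<open>B\<close> one-dimensionally by the first
  coordinate, recovering \<open>R(x\<^sub>1, \<dots>, x\<^sub>k)\<close> as \<open>\<exists>z. R'(z) \<and> \<And>\<^sub>i E\<^sub>0\<^sub>i(x\<^sub>i, z)\<close>.
  Both composites are homotopic to the identity: one maps a tuple \<open>a\<close> to \<open>a\<^sub>0\<close>, defined by
  the equation \<open>x\<^sub>0 = y\<close>; the other maps \<open>(t\<^sub>1, \<dots>, t\<^sub>n)\<close> to \<open>(t\<^sub>1\<^sub>0, \<dots>, t\<^sub>n\<^sub>0)\<close>, defined by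
  \<open>\<And>\<^sub>i E\<^sub>0\<^sub>i(t\<^sub>i, s)\<close>.
\<close>

fun conjs :: "'s ppf list \<Rightarrow> 's ppf" where
  "conjs [] = PTop"
| "conjs (p # ps) = PConj p (conjs ps)"

lemma sat_conjs [simp]: "sat A (conjs ps) v \<longleftrightarrow> (\<forall>p\<in>set ps. sat A p v)"
  by (induction ps) auto

lemma wf_ppf_conjs [simp]: "wf_ppf A (conjs ps) \<longleftrightarrow> (\<forall>p\<in>set ps. wf_ppf A p)"
  by (induction ps) auto

lemma fv_conjs [simp]: "fv (conjs ps) = (\<Union>p\<in>set ps. fv p)"
  by (induction ps) auto

lemma map_nth_upt_eq_take: "k \<le> length xs \<Longrightarrow> map (\<lambda>i. xs ! i) [0..<k] = take k xs"
  by (rule nth_equalityI) auto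

lemma singletons_eq_map_concat:
  "set as \<subseteq> {[t] | t. t \<in> X} \<Longrightarrow> as = map (\<lambda>t. [t]) (concat as)"
  by (induction as) auto

lemma snoc_graph_eq:
  assumes "\<And>x. x \<in> X \<Longrightarrow> length x = n"
  shows "{x @ [f x] | x. x \<in> X \<and> P x} =
           {z. length z = Suc n \<and> take n z \<in> X \<and> P (take n z) \<and> z ! n = f (take n z)}"
proof (intro set_eqI iffI)
  fix z assume z: "z \<in> {z. length z = Suc n \<and> take n z \<in> X \<and> P (take n z) \<and> z ! n = f (take n z)}"
  then have "z = take n z @ [f (take n z)]"
    using take_Suc_conv_app_nth[of n z] by simp
  with z show "z \<in> {x @ [f x] | x. x \<in> X \<and> P x}"
    by blast
qed (auto simp: assms nth_append)

definition tuples :: "('a, 's) rstruct \<Rightarrow> nat \<Rightarrow> 'a list set" where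
  "tuples A n = {xs. length xs = n \<and> set xs \<subseteq> univ A}"

lemma nth_zero_in_univ: "0 < n \<Longrightarrow> t \<in> tuples C n \<Longrightarrow> t ! 0 \<in> univ C"
  by (auto simp: tuples_def)

lemma tuple_extension:
  assumes "0 < k" and "k \<le> n" and "w \<in> tuples C k"
  shows "\<exists>z \<in> tuples C n. take k z = w"
proof
  let ?z = "w @ replicate (n - k) (hd w)"
  have "w \<noteq> []"
    using assms(1,3) by (auto simp: tuples_def)
  then show "?z \<in> tuples C n"
    using assms(2,3) by (auto simp: tuples_def hd_in_set)
  show "take k ?z = w"
    using assms(3) by (simp add: tuples_def)
qed

lemma pp_definableI:
  assumes "wf_ppf A \<phi>" and "fv \<phi> \<subseteq> {..<n}" and "R \<subseteq> tuples A n"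
    and "\<And>xs. xs \<in> tuples A n \<Longrightarrow> xs \<in> R \<longleftrightarrow> sat A \<phi> (\<lambda>i. xs ! i)"
  shows "pp_definable A n R"
  unfolding pp_definable_def
  using assms by (intro exI[of _ \<phi>]) (auto simp: tuples_def)

section \<open>Composition with one-dimensional interpretations\<close>

lemma idim_interp_comp [simp]: "idim (interp_comp I1 I2) = idim I1 * idim I2"
  by (simp add: interp_comp_def)

lemma blocks_dim_one: "length xs = n \<Longrightarrow> blocks n 1 xs = map (\<lambda>x. [x]) xs"
  unfolding blocks_def by (rule nth_equalityI) (auto simp: take_Suc_conv_app_nth)

lemma idom_interp_comp_outer_dim_one:
  assumes "idim I1 = 1"
  shows "xs \<in> idom (interp_comp I1 I2) \<longleftrightarrow>
           length xs = idim I2 \<and> xs \<in> idom I2 \<and> [imap I2 xs] \<in> idom I1"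
  using assms by (auto simp: interp_comp_def blocks_def)

lemma imap_interp_comp_outer_dim_one:
  assumes "idim I1 = 1" and "length xs = idim I2"
  shows "imap (interp_comp I1 I2) xs = imap I1 [imap I2 xs]"
  using assms by (simp add: interp_comp_def blocks_def)

lemma idom_interp_comp_inner_dim_one:
  assumes "idim I2 = 1"
  shows "xs \<in> idom (interp_comp I1 I2) \<longleftrightarrow>
           length xs = idim I1 \<and> (\<forall>x\<in>set xs. [x] \<in> idom I2) \<and>
           map (\<lambda>x. imap I2 [x]) xs \<in> idom I1"
  using assms blocks_dim_one[of xs "idim I1"] by (auto simp: interp_comp_def comp_def)

lemma imap_interp_comp_inner_dim_one:
  assumes "idim I2 = 1" and "length xs = idim I1"
  shows "imap (interp_comp I1 I2) xs = imap I1 (map (\<lambda>x. imap I2 [x]) xs)"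
  using assms blocks_dim_one[of xs "idim I1"] by (simp add: interp_comp_def comp_def)

lemma homotopic_id_interp_iff:
  "homotopic A I (id_interp A) \<longleftrightarrow>
     pp_definable A (idim I + 1) {x @ [imap I x] | x. x \<in> idom I \<and> imap I x \<in> univ A}"
proof -
  have "{x @ y | x y. x \<in> idom I \<and> y \<in> idom (id_interp A) \<and> imap I x = imap (id_interp A) y}
        = {x @ [imap I x] | x. x \<in> idom I \<and> imap I x \<in> univ A}"
    unfolding id_interp_def by force
  then show ?thesis
    by (simp add: homotopic_def id_interp_def)
qed

lemma homotopic_id_interpI:
  assumes dom: "idom I \<subseteq> tuples A (idim I)" and map: "imap I ` idom I \<subseteq> univ A"
    and "wf_ppf A \<phi>" and "fv \<phi> \<subseteq> {..<Suc (idim I)}"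
    and graph: "\<And>z. z \<in> tuples A (Suc (idim I)) \<Longrightarrow>
           sat A \<phi> (\<lambda>i. z ! i) \<longleftrightarrow>
           take (idim I) z \<in> idom I \<and> z ! idim I = imap I (take (idim I) z)"
  shows "homotopic A I (id_interp A)"
proof -
  have len: "length x = idim I" if "x \<in> idom I" for x
    using dom that by (auto simp: tuples_def)
  have "pp_definable A (Suc (idim I)) {x @ [imap I x] | x. x \<in> idom I \<and> imap I x \<in> univ A}"
  proof (rule pp_definableI)
    show "{x @ [imap I x] | x. x \<in> idom I \<and> imap I x \<in> univ A} \<subseteq> tuples A (Suc (idim I))"
      using dom by (auto simp: tuples_def subset_iff)
    fix z assume "z \<in> tuples A (Suc (idim I))"
    then show "z \<in> {x @ [imap I x] | x. x \<in> idom I \<and> imap I x \<in> univ A} \<longleftrightarrow>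
               sat A \<phi> (\<lambda>i. z ! i)"
      using map graph by (auto simp: snoc_graph_eq[OF len] tuples_def)
  qed fact+
  then show ?thesis
    by (simp add: homotopic_id_interp_iff)
qed

section \<open>The binary structure on tuples\<close>

text \<open>The binary symbol \<open>Inr (i * n + j)\<close> stands for \<open>E\<^sub>i\<^sub>j\<close>.\<close>

definition binary_struct :: "('a, 's) rstruct \<Rightarrow> nat \<Rightarrow> ('a list, 's + nat) rstruct" where
  "binary_struct C n =
     \<lparr> univ = tuples C n,
       sig = Inl ` sig C \<union> Inr ` {..<n * n},
       ar = (\<lambda>R. case R of Inl s \<Rightarrow> 1 | Inr k \<Rightarrow> 2),
       rel = (\<lambda>R. case R of
                 Inl s \<Rightarrow> {[t] | t. t \<in> tuples C n \<and> take (ar C s) t \<in> rel C s}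
               | Inr k \<Rightarrow> {[a, b] | a b. a \<in> tuples C n \<and> b \<in> tuples C n \<and>
                                          a ! (k div n) = b ! (k mod n)}) \<rparr>"

lemma wf_struct_binary_struct: "wf_struct (binary_struct C n)"
  unfolding wf_struct_def binary_struct_def by (auto simp: tuples_def subset_iff)

lemma arity_bounded_binary_struct: "arity_bounded 2 (binary_struct C n)"
  unfolding arity_bounded_def binary_struct_def by auto

lemma finite_sig_binary_struct: "finite (sig C) \<Longrightarrow> finite (sig (binary_struct C n))"
  unfolding binary_struct_def by auto

lemma univ_binary_struct [simp]: "univ (binary_struct C n) = tuples C n"
  by (simp add: binary_struct_def)

lemma unary_rel_binary_struct:
  "[t] \<in> rel (binary_struct C n) (Inl R) \<longleftrightarrow> t \<in> tuples C n \<and> take (ar C R) t \<in> rel C R"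
  by (simp add: binary_struct_def)

lemma first_coords_in_tuples:
  assumes "0 < n" and "ts \<in> tuples (binary_struct C n) k"
  shows "map (\<lambda>t. t ! 0) ts \<in> tuples C k"
  using assms nth_zero_in_univ[OF assms(1)]
  unfolding tuples_def[of C k] by (auto simp: tuples_def[of "binary_struct C n"])

definition coord_eq :: "nat \<Rightarrow> nat \<Rightarrow> nat \<Rightarrow> nat \<Rightarrow> nat \<Rightarrow> ('s + nat) ppf" where
  "coord_eq n i j x y = PRel (Inr (i * n + j)) [x, y]"

lemma wf_ppf_coord_eq:
  assumes "i < n" and "j < n"
  shows "wf_ppf (binary_struct C n) (coord_eq n i j x y)"
proof -
  have "i * n + j < Suc i * n"
    using assms(2) by simp
  also have "\<dots> \<le> n * n"
    using assms(1) by (intro mult_le_mono1) simp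
  finally have "i * n + j < n * n" .
  then show ?thesis
    by (simp add: coord_eq_def binary_struct_def)
qed

lemma fv_coord_eq [simp]: "fv (coord_eq n i j x y) = {x, y}"
  by (simp add: coord_eq_def)

lemma sat_coord_eq:
  assumes "j < n"
  shows "sat (binary_struct C n) (coord_eq n i j x y) v \<longleftrightarrow>
           v x \<in> tuples C n \<and> v y \<in> tuples C n \<and> v x ! i = v y ! j"
  using assms by (simp add: coord_eq_def binary_struct_def)

definition tuple_interp :: "('a, 's) rstruct \<Rightarrow> nat \<Rightarrow> ('a, 'a list) interp" where
  "tuple_interp C n = \<lparr> idim = n, idom = tuples C n, imap = id \<rparr>"

definition first_coord_interp :: "('a, 's) rstruct \<Rightarrow> nat \<Rightarrow> ('a list, 'a) interp" where
  "first_coord_interp C n = \<lparr> idim = 1, idom = {[t] | t. t \<in> tuples C n}, imap = (\<lambda>x. hd x ! 0) \<rparr>"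

lemma idim_tuple_interp [simp]: "idim (tuple_interp C n) = n"
  by (simp add: tuple_interp_def)

lemma idim_first_coord_interp [simp]: "idim (first_coord_interp C n) = 1"
  by (simp add: first_coord_interp_def)

lemma is_pp_interp_tuple_interp:
  assumes "arity_bounded n C"
  shows "is_pp_interp C (binary_struct C n) (tuple_interp C n)"
  unfolding is_pp_interp_def Let_def
proof (intro conjI ballI)
  show "pp_definable C (idim (tuple_interp C n)) (idom (tuple_interp C n))"
    by (rule pp_definableI[of C PTop]) (auto simp: tuple_interp_def)
  show "imap (tuple_interp C n) ` idom (tuple_interp C n) = univ (binary_struct C n)"
    by (simp add: tuple_interp_def binary_struct_def)
  fix R assume R: "R \<in> sig (binary_struct C n)"
  show "\<exists>\<phi>. wf_ppf C \<phi> \<and> fv \<phi> \<subseteq> {..<idim (tuple_interp C n) * ar (binary_struct C n) R} \<and>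
           (\<forall>as. length as = ar (binary_struct C n) R \<longrightarrow> set as \<subseteq> idom (tuple_interp C n) \<longrightarrow>
              (map (imap (tuple_interp C n)) as \<in> rel (binary_struct C n) R) =
              sat C \<phi> (\<lambda>i. concat as ! i))"
  proof (cases R)
    case (Inl s)
    with R have s: "s \<in> sig C"
      by (auto simp: binary_struct_def)
    with assms have "ar C s \<le> n"
      by (simp add: arity_bounded_def)
    with s Inl show ?thesis
      by (intro exI[of _ "PRel s [0..<ar C s]"])
        (auto simp: tuple_interp_def binary_struct_def tuples_def length_Suc_conv map_nth_upt_eq_take)
  next
    case (Inr k)
    with R have "k < n * n"
      by (auto simp: binary_struct_def)
    then have "0 < n"
      by (cases n) auto
    with \<open>k < n * n\<close> have "k div n < n" and "k mod n < n"
      by (auto simp: less_mult_imp_div_less)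
    with Inr show ?thesis
      by (intro exI[of _ "PEq (k div n) (n + k mod n)"])
        (auto simp: tuple_interp_def binary_struct_def tuples_def length_Suc_conv numeral_2_eq_2
          nth_append)
  qed
next
  show "\<exists>\<phi>. wf_ppf C \<phi> \<and> fv \<phi> \<subseteq> {..<2 * idim (tuple_interp C n)} \<and>
           (\<forall>a\<in>idom (tuple_interp C n). \<forall>b\<in>idom (tuple_interp C n).
              (imap (tuple_interp C n) a = imap (tuple_interp C n) b) = sat C \<phi> (\<lambda>i. (a @ b) ! i))"
    by (intro exI[of _ "conjs (map (\<lambda>i. PEq i (n + i)) [0..<n])"])
      (auto simp: tuple_interp_def tuples_def nth_append intro: nth_equalityI)
qed

definition first_coord_rel_formula :: "nat \<Rightarrow> 's \<Rightarrow> nat \<Rightarrow> ('s + nat) ppf" where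
  "first_coord_rel_formula n R k =
     PEx k (PConj (PRel (Inl R) [k]) (conjs (map (\<lambda>i. coord_eq n 0 i i k) [0..<k])))"

lemma wf_ppf_first_coord_rel_formula:
  assumes "R \<in> sig C" and "k \<le> n"
  shows "wf_ppf (binary_struct C n) (first_coord_rel_formula n R k)"
proof -
  have "wf_ppf (binary_struct C n) (PRel (Inl R) [k])"
    using assms(1) by (simp add: binary_struct_def)
  moreover have "wf_ppf (binary_struct C n) (coord_eq n 0 i i k)" if "i < k" for i
    using that assms(2) by (intro wf_ppf_coord_eq) auto
  ultimately show ?thesis
    by (simp add: first_coord_rel_formula_def)
qed

lemma fv_first_coord_rel_formula: "fv (first_coord_rel_formula n R k) \<subseteq> {..<k}"
  by (auto simp: first_coord_rel_formula_def)

lemma sat_first_coord_rel_formula: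
  assumes "0 < k" and "k \<le> n" and "ar C R = k" and "ts \<in> tuples (binary_struct C n) k"
  shows "sat (binary_struct C n) (first_coord_rel_formula n R k) (\<lambda>i. ts ! i) \<longleftrightarrow>
           map (\<lambda>t. t ! 0) ts \<in> rel C R"
proof -
  let ?w = "map (\<lambda>t. t ! 0) ts"
  have ts: "length ts = k" "set ts \<subseteq> tuples C n"
    using assms(4) by (simp_all add: tuples_def binary_struct_def)
  have w: "?w \<in> tuples C k"
    using assms(1,2,4) by (intro first_coords_in_tuples) auto
  have "sat (binary_struct C n) (first_coord_rel_formula n R k) (\<lambda>i. ts ! i) \<longleftrightarrow>
          (\<exists>z \<in> tuples C n. take k z \<in> rel C R \<and> (\<forall>i<k. ts ! i ! 0 = z ! i))"
    using ts assms(2,3)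
    by (auto simp: first_coord_rel_formula_def sat_coord_eq unary_rel_binary_struct) force
  also have "\<dots> \<longleftrightarrow> (\<exists>z \<in> tuples C n. take k z \<in> rel C R \<and> take k z = ?w)"
    using ts assms(2) by (auto simp: tuples_def list_eq_iff_nth_eq)
  also have "\<dots> \<longleftrightarrow> ?w \<in> rel C R"
    using tuple_extension[OF assms(1,2) w] by metis
  finally show ?thesis .
qed

lemma first_coord_interp_rel:
  assumes "0 < n" and "arity_bounded n C" and "R \<in> sig C"
  shows "\<exists>\<phi>. wf_ppf (binary_struct C n) \<phi> \<and> fv \<phi> \<subseteq> {..<ar C R} \<and>
           (\<forall>as. length as = ar C R \<longrightarrow> set as \<subseteq> idom (first_coord_interp C n) \<longrightarrow>
              (map (imap (first_coord_interp C n)) as \<in> rel C R \<longleftrightarrow>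
               sat (binary_struct C n) \<phi> (\<lambda>i. concat as ! i)))"
proof (cases "ar C R = 0")
  case True
  then show ?thesis
    by (cases "[] \<in> rel C R") (auto intro: exI[of _ PTop] exI[of _ PBot])
next
  case False
  have "ar C R \<le> n"
    using assms(2,3) by (simp add: arity_bounded_def)
  have "map (imap (first_coord_interp C n)) as \<in> rel C R \<longleftrightarrow>
          sat (binary_struct C n) (first_coord_rel_formula n R (ar C R)) (\<lambda>i. concat as ! i)"
    if "length as = ar C R" and "set as \<subseteq> idom (first_coord_interp C n)" for as
  proof -
    define ts where "ts = concat as"
    have as: "as = map (\<lambda>t. [t]) ts"
      using that(2) unfolding ts_def
      by (intro singletons_eq_map_concat) (simp add: first_coord_interp_def)
    have "ts \<in> tuples (binary_struct C n) (ar C R)"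
      using that unfolding as by (auto simp: first_coord_interp_def tuples_def)
    moreover have "map (imap (first_coord_interp C n)) as = map (\<lambda>t. t ! 0) ts"
      unfolding as by (simp add: first_coord_interp_def)
    ultimately show ?thesis
      using False \<open>ar C R \<le> n\<close> by (simp add: sat_first_coord_rel_formula ts_def)
  qed
  then show ?thesis
    using assms(3) \<open>ar C R \<le> n\<close>
    by (intro exI[of _ "first_coord_rel_formula n R (ar C R)"])
      (simp add: wf_ppf_first_coord_rel_formula fv_first_coord_rel_formula)
qed

lemma is_pp_interp_first_coord_interp:
  assumes "0 < n" and "arity_bounded n C"
  shows "is_pp_interp (binary_struct C n) C (first_coord_interp C n)"
  unfolding is_pp_interp_def Let_def
proof (intro conjI ballI)
  show "pp_definable (binary_struct C n) (idim (first_coord_interp C n)) (idom (first_coord_interp C n))"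
    by (rule pp_definableI[of _ PTop]) (auto simp: first_coord_interp_def tuples_def length_Suc_conv)
  have "c \<in> imap (first_coord_interp C n) ` idom (first_coord_interp C n)" if "c \<in> univ C" for c
    using that assms(1)
    by (intro image_eqI[of _ _ "[replicate n c]"]) (auto simp: first_coord_interp_def tuples_def)
  then show "imap (first_coord_interp C n) ` idom (first_coord_interp C n) = univ C"
    using nth_zero_in_univ[OF assms(1)] by (auto simp: first_coord_interp_def)
  show "\<exists>\<phi>. wf_ppf (binary_struct C n) \<phi> \<and> fv \<phi> \<subseteq> {..<idim (first_coord_interp C n) * ar C R} \<and>
          (\<forall>as. length as = ar C R \<longrightarrow> set as \<subseteq> idom (first_coord_interp C n) \<longrightarrow>
             (map (imap (first_coord_interp C n)) as \<in> rel C R) =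
             sat (binary_struct C n) \<phi> (\<lambda>i. concat as ! i))" if "R \<in> sig C" for R
    using first_coord_interp_rel[OF assms that] by (simp add: first_coord_interp_def)
  show "\<exists>\<phi>. wf_ppf (binary_struct C n) \<phi> \<and> fv \<phi> \<subseteq> {..<2 * idim (first_coord_interp C n)} \<and>
          (\<forall>a\<in>idom (first_coord_interp C n). \<forall>b\<in>idom (first_coord_interp C n).
             (imap (first_coord_interp C n) a = imap (first_coord_interp C n) b) =
             sat (binary_struct C n) \<phi> (\<lambda>i. (a @ b) ! i))"
    using assms(1)
    by (intro exI[of _ "coord_eq n 0 0 0 1"])
      (auto simp: wf_ppf_coord_eq sat_coord_eq first_coord_interp_def)
qed

section \<open>The composites are homotopic to the identity\<close>

lemma homotopic_first_coord_tuple: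
  assumes "0 < n"
  shows "homotopic C (interp_comp (first_coord_interp C n) (tuple_interp C n)) (id_interp C)"
proof -
  let ?K = "interp_comp (first_coord_interp C n) (tuple_interp C n)"
  have dom: "idom ?K = tuples C n"
    by (auto simp: idom_interp_comp_outer_dim_one first_coord_interp_def tuple_interp_def tuples_def)
  have map: "imap ?K x = x ! 0" if "x \<in> tuples C n" for x
    using that by (simp add: imap_interp_comp_outer_dim_one first_coord_interp_def tuple_interp_def
        tuples_def)
  show ?thesis
  proof (rule homotopic_id_interpI[of _ _ "PEq 0 n"])
    fix z assume "z \<in> tuples C (Suc (idim ?K))"
    then have "take n z \<in> tuples C n"
      by (auto simp: tuples_def dest: in_set_takeD)
    then show "sat C (PEq 0 n) (\<lambda>i. z ! i) \<longleftrightarrow>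
               take (idim ?K) z \<in> idom ?K \<and> z ! idim ?K = imap ?K (take (idim ?K) z)"
      using assms by (auto simp: dom map)
  qed (use assms in \<open>auto simp: dom map nth_zero_in_univ\<close>)
qed

lemma homotopic_tuple_first_coord:
  assumes "0 < n"
  shows "homotopic (binary_struct C n) (interp_comp (tuple_interp C n) (first_coord_interp C n))
           (id_interp (binary_struct C n))"
proof -
  let ?B = "binary_struct C n"
  let ?K = "interp_comp (tuple_interp C n) (first_coord_interp C n)"
  let ?\<phi> = "conjs (map (\<lambda>i. coord_eq n 0 i i n) [0..<n])"
  have "x \<in> idom ?K \<longleftrightarrow> x \<in> tuples ?B n" for x
  proof -
    have "x \<in> idom ?K \<longleftrightarrow>
            length x = n \<and> set x \<subseteq> tuples C n \<and> map (\<lambda>t. t ! 0) x \<in> tuples C n"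
      by (auto simp: idom_interp_comp_inner_dim_one first_coord_interp_def tuple_interp_def)
    also have "\<dots> \<longleftrightarrow> x \<in> tuples ?B n"
      using first_coords_in_tuples[OF assms, where C = C and ts = x and k = n]
      by (auto simp: tuples_def[of ?B])
    finally show ?thesis .
  qed
  then have dom: "idom ?K = tuples ?B n"
    by blast
  have map: "imap ?K x = map (\<lambda>t. t ! 0) x" if "x \<in> tuples ?B n" for x
    using that by (simp add: imap_interp_comp_inner_dim_one first_coord_interp_def tuple_interp_def
        tuples_def)
  show ?thesis
  proof (rule homotopic_id_interpI[of _ _ ?\<phi>])
    fix z assume "z \<in> tuples ?B (Suc (idim ?K))"
    then have z: "z \<in> tuples ?B (Suc n)"
      by simp
    have "length z = Suc n"
      using z by (simp add: tuples_def)
    moreover have "take n z \<in> tuples ?B n"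
      using z by (auto simp: tuples_def dest: in_set_takeD)
    moreover have "z ! n \<in> tuples C n"
      using z nth_mem[of n z] by (auto simp: tuples_def[of ?B])
    moreover have "z ! i \<in> tuples C n" if "i < n" for i
      using z that nth_mem[of i z] by (auto simp: tuples_def[of ?B])
    ultimately show "sat ?B ?\<phi> (\<lambda>i. z ! i) \<longleftrightarrow>
               take (idim ?K) z \<in> idom ?K \<and> z ! idim ?K = imap ?K (take (idim ?K) z)"
      by (auto simp: dom map sat_coord_eq list_eq_iff_nth_eq tuples_def[of C n])
  qed (use assms in \<open>auto simp: dom map wf_ppf_coord_eq first_coords_in_tuples\<close>)
qed

theorem mainTheorem16:
  fixes C :: "('a, 's) rstruct" and m :: nat
  assumes "wf_struct C" and "arity_bounded m C"
  shows "\<exists>B :: ('a list, 's + nat) rstruct.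
           wf_struct B \<and> arity_bounded 2 B \<and> pp_biinterpretable B C \<and>
           (finite (sig C) \<longrightarrow> finite (sig B))"
proof (intro exI conjI impI)
  let ?n = "Suc m"
  have "arity_bounded ?n C"
    using assms(2) by (auto simp: arity_bounded_def)
  then show "pp_biinterpretable (binary_struct C ?n) C"
    unfolding pp_biinterpretable_def
    using is_pp_interp_first_coord_interp is_pp_interp_tuple_interp
      homotopic_tuple_first_coord homotopic_first_coord_tuple
    by blast
qed (simp_all add: wf_struct_binary_struct arity_bounded_binary_struct finite_sig_binary_struct)

end
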